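(* Let $m\geq 1$ and $n\geq 3$. For every $k\in\{1,\ldots,m\}$, there exists exactly one walk in $D^m_n$ of length $2n-2$ from vertex $(k-1)(n-1)+2$ to vertex $(k-1)(n-1)+n$.
   Context: For integers $m\geq 1$, $n\geq 3$, the oriented Dutch windmill graph $D^m_n$ is the directed graph with vertex set $V=\{1,2,\ldots,m(n-1)+1\}$ whose directed edges $(a,b)$ are exactly: $(1,(k-1)(n-1)+2)$ for $k\in\{1,\ldots,m\}$; $((k-1)(n-1)+i,(k-1)(n-1)+i+1)$ for $k\in\{1,\ldots,m\}$ and $i\in\{2,\ldots,n-1\}$; and $((k-1)(n-1)+n,1)$ for $k\in\{1,\ldots,m\}$. A walk is a sequence of vertices $\langle v_1,\ldots,v_r\rangle$ in which each $(v_t,v_{t+1})$ is an edge; its length is $r-1$. *)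

theory Defs
  imports Main
begin

definition dw_vertices :: "nat \<Rightarrow> nat \<Rightarrow> nat set" where
  "dw_vertices m n = {1 .. m * (n - 1) + 1}"

definition dw_edge :: "nat \<Rightarrow> nat \<Rightarrow> nat \<Rightarrow> nat \<Rightarrow> bool" where
  "dw_edge m n a b \<longleftrightarrow>
     (\<exists>k\<in>{1..m}. a = 1 \<and> b = (k - 1) * (n - 1) + 2)
   \<or> (\<exists>k\<in>{1..m}. \<exists>i\<in>{2..n - 1}. a = (k - 1) * (n - 1) + i \<and> b = (k - 1) * (n - 1) + i + 1)
   \<or> (\<exists>k\<in>{1..m}. a = (k - 1) * (n - 1) + n \<and> b = 1)"

text \<open>A walk is a nonempty vertex sequence with consecutive vertices joined by edges;
  its length is the number of edges, i.e. length of the list minus one.\<close>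
definition dw_walk :: "nat \<Rightarrow> nat \<Rightarrow> nat list \<Rightarrow> bool" where
  "dw_walk m n vs \<longleftrightarrow> vs \<noteq> [] \<and> set vs \<subseteq> dw_vertices m n \<and>
     (\<forall>t. Suc t < length vs \<longrightarrow> dw_edge m n (vs ! t) (vs ! Suc t))"

end

theory Submission
  imports Defs
begin

(* Every vertex of a blade other than its tip has exactly one out-neighbour, the next vertex
   of that blade; the tip's only out-neighbour is the hub 1, and the hub leads to the first
   vertex of any blade.  A walk of length 2n - 2 from the first vertex of blade k therefore
   runs down blade k to its tip (n - 2 steps), through the hub (2 steps) and down some blade
   k' (n - 2 steps); ending at the tip of blade k forces k' = k.  The argument needs only
   n >= 2. *)

lemma bex_atLeastAtMost_one_conv:
  "(\<exists>k\<in>{1..m::nat}. P (k - 1)) \<longleftrightarrow> (\<exists>q<m. P q)"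
proof
  assume "\<exists>k\<in>{1..m}. P (k - 1)"
  then show "\<exists>q<m. P q" by (metis atLeastAtMost_iff diff_less le_less_trans less_one not_le)
next
  assume "\<exists>q<m. P q"
  then obtain q where "q < m" "P q" by blast
  then show "\<exists>k\<in>{1..m}. P (k - 1)" by (intro bexI[of _ "Suc q"]) auto
qed

lemma blade_vertex_inj:
  fixes n q q' i i' :: nat
  assumes "n \<ge> 2" "2 \<le> i" "i \<le> n" "2 \<le> i'" "i' \<le> n"
    and "q * (n - 1) + i = q' * (n - 1) + i'"
  shows "q = q' \<and> i = i'"
proof -
  have eq: "q * (n - 1) + (i - 2) = q' * (n - 1) + (i' - 2)"
    and lt: "i - 2 < n - 1" "i' - 2 < n - 1"
    using assms by auto
  from eq have "(q * (n - 1) + (i - 2)) div (n - 1) = (q' * (n - 1) + (i' - 2)) div (n - 1)"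
    and "(q * (n - 1) + (i - 2)) mod (n - 1) = (q' * (n - 1) + (i' - 2)) mod (n - 1)"
    by simp_all
  with lt have "q = q'" "i - 2 = i' - 2"
    by simp_all
  with assms show ?thesis by simp
qed

lemma dw_edge_iff:
  "dw_edge m n a b \<longleftrightarrow>
     (\<exists>q<m. a = 1 \<and> b = q * (n - 1) + 2)
   \<or> (\<exists>q<m. \<exists>i\<in>{2..n - 1}. a = q * (n - 1) + i \<and> b = q * (n - 1) + i + 1)
   \<or> (\<exists>q<m. a = q * (n - 1) + n \<and> b = 1)"
  unfolding dw_edge_def bex_atLeastAtMost_one_conv[symmetric] ..

lemma dw_edge_from_blade:
  assumes "2 \<le> i" "i \<le> n - 1" "dw_edge m n (q * (n - 1) + i) b"
  shows "b = q * (n - 1) + i + 1"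
proof -
  have "n \<ge> 2" "i \<le> n"
    using assms(1,2) by linarith+
  from assms(3) show ?thesis
    unfolding dw_edge_iff
  proof (elim disjE exE conjE bexE)
    fix q' i' assume "i' \<in> {2..n - 1}" "q * (n - 1) + i = q' * (n - 1) + i'"
      "b = q' * (n - 1) + i' + 1"
    with assms(1) \<open>n \<ge> 2\<close> \<open>i \<le> n\<close> blade_vertex_inj[of n i i' q q'] show ?thesis by auto
  next
    fix q' assume "q * (n - 1) + i = q' * (n - 1) + n"
    then have "i = n" using blade_vertex_inj[of n i n q q'] assms(1) \<open>n \<ge> 2\<close> \<open>i \<le> n\<close> by simp
    with assms(2) \<open>n \<ge> 2\<close> show ?thesis by linarith
  qed (use assms in auto)
qed

lemma dw_edge_from_tip:
  assumes "n \<ge> 2" "dw_edge m n (q * (n - 1) + n) b"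
  shows "b = 1"
  using assms(2) unfolding dw_edge_iff
proof (elim disjE exE conjE bexE)
  fix q' i' assume "i' \<in> {2..n - 1}" "q * (n - 1) + n = q' * (n - 1) + i'"
  moreover from \<open>i' \<in> {2..n - 1}\<close> have "2 \<le> i'" "i' \<le> n - 1" by auto
  ultimately have "i' = n" using blade_vertex_inj[of n n i' q q'] assms(1) by linarith
  with assms(1) \<open>i' \<le> n - 1\<close> show ?thesis by linarith
qed (use assms in auto)

lemma dw_edge_from_hub: "n \<ge> 2 \<Longrightarrow> dw_edge m n 1 b \<Longrightarrow> \<exists>q<m. b = q * (n - 1) + 2"
  unfolding dw_edge_iff by auto

(* The non-hub vertices of the blade with paper index k = q + 1, in the order of its edges. *)
definition blade :: "nat \<Rightarrow> nat \<Rightarrow> nat list" where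
  "blade n q = map (\<lambda>j. q * (n - 1) + 2 + j) [0..<n - 1]"

lemma length_blade [simp]: "length (blade n q) = n - 1"
  by (simp add: blade_def)

lemma hd_blade: "n \<ge> 2 \<Longrightarrow> hd (blade n q) = q * (n - 1) + 2"
  by (simp add: blade_def hd_map)

lemma last_blade: "n \<ge> 2 \<Longrightarrow> last (blade n q) = q * (n - 1) + n"
  by (simp add: blade_def last_map)

lemma set_blade_subset_dw_vertices:
  assumes "q < m"
  shows "set (blade n q) \<subseteq> dw_vertices m n"
proof
  fix v assume "v \<in> set (blade n q)"
  then obtain j where j: "j < n - 1" "v = q * (n - 1) + 2 + j"
    by (auto simp: blade_def)
  have "q * (n - 1) + 2 + j \<le> Suc q * (n - 1) + 1"
    using j by simp
  also have "\<dots> \<le> m * (n - 1) + 1"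
    using mult_le_mono1[of "Suc q" m "n - 1"] assms by simp
  finally show "v \<in> dw_vertices m n"
    using j by (simp add: dw_vertices_def)
qed

lemma successively_dw_edge_blade:
  assumes "q < m"
  shows "successively (dw_edge m n) (blade n q)"
proof -
  have "dw_edge m n (q * (n - 1) + 2 + j) (q * (n - 1) + 2 + Suc j)" if "Suc j < n - 1" for j
    using assms that unfolding dw_edge_iff by (intro disjI2 disjI1 exI[of _ q] bexI[of _ "2 + j"]) auto
  then show ?thesis
    by (simp add: blade_def successively_conv_nth)
qed

lemma successively_dw_edge_along_blade:
  assumes "successively (dw_edge m n) vs" "vs \<noteq> []"
    and "hd vs = q * (n - 1) + i" "2 \<le> i" "i + length vs \<le> n + 1"
  shows "vs = map (\<lambda>j. q * (n - 1) + i + j) [0..<length vs]"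
  using assms
proof (induction vs arbitrary: i)
  case Nil
  then show ?case by simp
next
  case (Cons v vs)
  show ?case
  proof (cases "vs = []")
    case True
    with Cons.prems show ?thesis by simp
  next
    case False
    with Cons.prems have "dw_edge m n (q * (n - 1) + i) (hd vs)" "successively (dw_edge m n) vs"
      by (simp_all add: successively_Cons)
    moreover from Cons.prems False have "i \<le> n - 1"
      by (cases vs) auto
    ultimately have "hd vs = q * (n - 1) + Suc i"
      using dw_edge_from_blade[of i n m q] Cons.prems by simp
    with Cons.IH[of "Suc i"] Cons.prems \<open>successively (dw_edge m n) vs\<close> False
    have "vs = map (\<lambda>j. q * (n - 1) + Suc i + j) [0..<length vs]"
      by simp
    with Cons.prems show ?thesis
      by (simp add: map_upt_Suc del: upt_Suc)
  qed
qed

lemma successively_dw_edge_eq_blade: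
  assumes "successively (dw_edge m n) vs" "n \<ge> 2"
    and "length vs = n - 1" "hd vs = q * (n - 1) + 2"
  shows "vs = blade n q"
proof -
  from assms(2,3) have "vs \<noteq> []" by auto
  with successively_dw_edge_along_blade[OF assms(1) this assms(4)] assms(2,3) show ?thesis
    by (simp add: blade_def)
qed

lemma dw_walk_iff_successively:
  "dw_walk m n vs \<longleftrightarrow> vs \<noteq> [] \<and> set vs \<subseteq> dw_vertices m n \<and> successively (dw_edge m n) vs"
  by (simp add: dw_walk_def successively_conv_nth)

lemma dw_walk_blade_hub_blade:
  assumes "n \<ge> 2" "q < m"
  shows "dw_walk m n (blade n q @ 1 # blade n q)"
proof -
  have "dw_edge m n (last (blade n q)) 1" "dw_edge m n 1 (hd (blade n q))"
    using assms by (auto simp: hd_blade last_blade dw_edge_iff)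
  moreover have "1 \<in> dw_vertices m n"
    by (simp add: dw_vertices_def)
  ultimately show ?thesis
    using assms set_blade_subset_dw_vertices[OF assms(2)] successively_dw_edge_blade[OF assms(2)]
    by (auto simp: dw_walk_iff_successively successively_append_iff successively_Cons)
qed

lemma dw_walk_blade_start_to_tip_eq:
  assumes "n \<ge> 2" "dw_walk m n vs" "length vs = 2 * n - 1"
    and "hd vs = q * (n - 1) + 2" "last vs = q * (n - 1) + n"
  shows "vs = blade n q @ 1 # blade n q"
proof -
  define us where "us = take (n - 1) vs"
  define ws where "ws = drop n vs"
  have split: "vs = us @ vs ! (n - 1) # ws"
    using id_take_nth_drop[of "n - 1" vs] assms(1,3) by (simp add: us_def ws_def)
  have lengths: "length us = n - 1" "length ws = n - 1"
    using assms(1,3) by (simp_all add: us_def ws_def)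
  have "successively (dw_edge m n) vs"
    using assms(2) by (simp add: dw_walk_iff_successively)
  then have "successively (dw_edge m n) (us @ vs ! (n - 1) # ws)"
    by (metis split)
  then have edges: "successively (dw_edge m n) us" "successively (dw_edge m n) ws"
      "dw_edge m n (last us) (vs ! (n - 1))" "dw_edge m n (vs ! (n - 1)) (hd ws)"
    using assms(1) lengths by (auto simp: successively_append_iff successively_Cons)
  have "hd us = q * (n - 1) + 2"
    using assms(1,3,4) by (simp add: us_def)
  then have us: "us = blade n q"
    using successively_dw_edge_eq_blade[OF edges(1) assms(1) lengths(1)] by blast
  then have hub: "vs ! (n - 1) = 1"
    using dw_edge_from_tip[of n m q] edges(3) assms(1) by (simp add: last_blade)
  then obtain q' where "hd ws = q' * (n - 1) + 2"
    using dw_edge_from_hub[OF assms(1)] edges(4) by auto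
  then have ws: "ws = blade n q'"
    using successively_dw_edge_eq_blade[OF edges(2) assms(1) lengths(2)] by blast
  have "last vs = last ws"
    using lengths(2) assms(1) by (subst split) auto
  then have "q' * (n - 1) + n = q * (n - 1) + n"
    using assms(1,5) ws by (simp add: last_blade)
  then have "q' = q"
    using assms(1) blade_vertex_inj[of n n n q' q] by simp
  with split us hub ws show ?thesis by simp
qed

theorem lemma2p11:
  fixes m n k :: nat
  assumes "m \<ge> 1" and "n \<ge> 3" and "k \<in> {1..m}"
  shows "\<exists>!vs. dw_walk m n vs \<and> length vs = (2 * n - 2) + 1
              \<and> hd vs = (k - 1) * (n - 1) + 2 \<and> last vs = (k - 1) * (n - 1) + n"
proof -
  have "n \<ge> 2"
    using assms(2) by simp
  define W where "W = blade n (k - 1) @ 1 # blade n (k - 1)"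
  have "k - 1 < m"
    using assms(3) by auto
  then have "dw_walk m n W"
    using \<open>n \<ge> 2\<close> dw_walk_blade_hub_blade by (simp add: W_def)
  moreover have "length W = (2 * n - 2) + 1"
    "hd W = (k - 1) * (n - 1) + 2" "last W = (k - 1) * (n - 1) + n"
    using \<open>n \<ge> 2\<close> by (auto simp: W_def hd_blade last_blade hd_append simp flip: length_0_conv)
  moreover have "vs = W" if "dw_walk m n vs" "length vs = (2 * n - 2) + 1"
    "hd vs = (k - 1) * (n - 1) + 2" "last vs = (k - 1) * (n - 1) + n" for vs
  proof -
    have "length vs = 2 * n - 1"
      using that(2) \<open>n \<ge> 2\<close> by simp
    then show ?thesis
      using dw_walk_blade_start_to_tip_eq[OF \<open>n \<ge> 2\<close> that(1) _ that(3,4)] by (simp add: W_def)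
  qed
  ultimately show ?thesis by blast
qed

end
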